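(* For $0<\varepsilon\le1$, $$\tfrac12\varepsilon^2\inf_g\|g*g\|_\infty\le \tfrac12\varepsilon^2\inf_f\|f*f\|_\infty=\Delta(\varepsilon),$$ where the first infimum is over all pdfs $g$ supported on $[-\tfrac14,\tfrac14]$, and the second infimum is over all nifs $f$ whose support is a subset of $[-\tfrac14,\tfrac14]$ of measure $\varepsilon/2$.
   Context: $\mathbb{T}=\mathbb{R}/\mathbb{Z}$ with Lebesgue measure $\lambda$; integrals are over $\mathbb{T}$, $f*g(c)=\int_{\mathbb{T}} f(x)g(c-x)\,dx$, and $\|h\|_\infty$ is the essential supremum of $|h|$. Subsets of $[-\tfrac14,\tfrac14]$ are regarded as subsets of $\mathbb{T}$. A pdf is a nonnegative function in $L^2(\mathbb{T})$ with $\int_{\mathbb{T}} f=1$. An nif is a pdf of the form $f_E=\lambda(E)^{-1}\mathbf{1}_E$ for a measurable $E\subseteq\mathbb{T}$ with $\lambda(E)>0$. A set $C\subseteq\mathbb{R}$ is symmetric if there is $c$ with $c+x\in C\iff c-x\in C$; $D(A):=\sup\{\lambda(C): C\subseteq A \text{ symmetric}\}$ and $\Delta(\varepsilon):=\inf\{D(A): A\subseteq[0,1) \text{ measurable},\ \lambda(A)=\varepsilon\}$. *)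

theory Defs
  imports "HOL-Analysis.Analysis" "HOL-Probability.Essential_Supremum"
begin

text \<open>The circle T = R/Z is modelled by 1-periodic functions on the reals;
  integration over T is integration over [0,1] w.r.t. Lebesgue measure.\<close>

definition periodic1 :: "(real \<Rightarrow> real) \<Rightarrow> bool" where
  "periodic1 f \<longleftrightarrow> (\<forall>x. f (x + 1) = f x)"

definition pdf :: "(real \<Rightarrow> real) \<Rightarrow> bool" where
  "pdf f \<longleftrightarrow> periodic1 f \<and> (\<forall>x. 0 \<le> f x)
     \<and> f \<in> borel_measurable (lebesgue_on {0..1})
     \<and> integrable (lebesgue_on {0..1}) (\<lambda>x. (f x)^2)
     \<and> integral\<^sup>L (lebesgue_on {0..1}) f = 1"

definition conv :: "(real \<Rightarrow> real) \<Rightarrow> (real \<Rightarrow> real) \<Rightarrow> real \<Rightarrow> real" where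
  "conv f g c = integral\<^sup>L (lebesgue_on {0..1}) (\<lambda>x. f x * g (c - x))"

definition supnorm :: "(real \<Rightarrow> real) \<Rightarrow> ereal" where
  "supnorm h = esssup (lebesgue_on {0..1}) (\<lambda>x. ereal \<bar>h x\<bar>)"

text \<open>Image in T of a set of reals (used for subsets of [-1/4,1/4]).\<close>
definition torus_set :: "real set \<Rightarrow> real set" where
  "torus_set E = {x. \<exists>k::int. x + of_int k \<in> E}"

definition nif_of :: "real set \<Rightarrow> real \<Rightarrow> real" where
  "nif_of E x = (if x \<in> torus_set E then 1 / measure lebesgue E else 0)"

definition symmetric_set :: "real set \<Rightarrow> bool" where
  "symmetric_set C \<longleftrightarrow> (\<exists>c. \<forall>x. c + x \<in> C \<longleftrightarrow> c - x \<in> C)"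

definition D :: "real set \<Rightarrow> real" where
  "D A = Sup {measure lebesgue C | C. C \<in> sets lebesgue \<and> C \<subseteq> A \<and> symmetric_set C}"

definition Delta :: "real \<Rightarrow> real" where
  "Delta \<epsilon> = Inf {D A | A. A \<subseteq> {0..<1} \<and> A \<in> sets lebesgue \<and> measure lebesgue A = \<epsilon>}"

end

theory Submission
  imports Defs
begin

text \<open>For \<open>E \<subseteq> [-1/4, 1/4]\<close> and \<open>c \<in> [0, 1]\<close> the convolution \<open>f\<^sub>E * f\<^sub>E (c)\<close>
  equals \<open>(|E \<inter> (c - E)| + |E \<inter> (c - 1 - E)|) / |E|\<^sup>2\<close>, and at most one of the two terms
  is nonzero. The function \<open>d \<mapsto> |E \<inter> (d - E)|\<close> is continuous (translation is continuous
  in measure), so the essential supremum of \<open>f\<^sub>E * f\<^sub>E\<close> is \<open>sup\<^sub>d |E \<inter> (d - E)| / |E|\<^sup>2\<close>.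
  Since \<open>E \<inter> (d - E)\<close> is the largest subset of \<open>E\<close> symmetric about \<open>d / 2\<close>, that supremum
  is \<open>D(E)\<close>. With \<open>|E| = \<epsilon> / 2\<close> this gives \<open>\<epsilon>\<^sup>2/2 \<parallel>f\<^sub>E * f\<^sub>E\<parallel>\<^sub>\<infinity> = 2 D(E) = D(2E + 1/2)\<close>,
  and \<open>E \<mapsto> 2E + 1/2\<close> matches the sets of measure \<open>\<epsilon>/2\<close> in \<open>[-1/4, 1/4]\<close> with those of
  measure \<open>\<epsilon>\<close> in \<open>[0, 1)\<close> up to a point. The inequality holds because every such \<open>f\<^sub>E\<close> is
  an admissible pdf.\<close>

section \<open>Affine images and translations of Lebesgue sets\<close>

lemma affine_image_eq_preimage:
  fixes m t :: real
  assumes "m \<noteq> 0"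
  shows "(\<lambda>x. m * x + t) ` S = (\<lambda>y. y / m - t / m) -` S"
proof (rule set_eqI)
  fix y
  have "y = m * (y / m - t / m) + t" using assms by (simp add: field_simps)
  then show "y \<in> (\<lambda>x. m * x + t) ` S \<longleftrightarrow> y \<in> (\<lambda>y. y / m - t / m) -` S"
    using assms by (auto intro: rev_image_eqI)
qed

lemma sets_lebesgue_affine_image:
  fixes m t :: real
  assumes "S \<in> sets lebesgue" "m \<noteq> 0"
  shows "(\<lambda>x. m * x + t) ` S \<in> sets lebesgue"
proof -
  have inverse_measurable: "(\<lambda>y. y / m - t / m) \<in> lebesgue \<rightarrow>\<^sub>M lebesgue"
    using lebesgue_affine_measurable[of "\<lambda>_. 1 / m" "- t / m"] assms(2) by simp
  have "(\<lambda>y. y / m - t / m) -` S \<in> sets lebesgue"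
    using measurable_sets[OF inverse_measurable assms(1)] by simp
  then show ?thesis using affine_image_eq_preimage[OF assms(2)] by simp
qed

lemma measure_lebesgue_affine_image:
  "measure lebesgue ((\<lambda>x. m * x + t) ` S) = \<bar>m\<bar> * measure lebesgue S" for m t :: real
  using measure_lebesgue_affine[of m t S] by simp

lemma lmeasurable_affine_image:
  fixes m t :: real
  assumes "S \<in> lmeasurable" "m \<noteq> 0"
  shows "(\<lambda>x. m * x + t) ` S \<in> lmeasurable"
proof -
  have "emeasure lebesgue ((\<lambda>x. m * x + t) ` S) = ennreal \<bar>m\<bar> * emeasure lebesgue S"
    using emeasure_lebesgue_affine[of m t S] by simp
  also have "\<dots> < \<infinity>"
    using assms(1) by (metis ennreal_less_top ennreal_mult_less_top fmeasurable_def infinity_ennreal_def mem_Collect_eq)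
  finally show ?thesis
    using sets_lebesgue_affine_image assms fmeasurable_def by blast
qed

lemma measure_Diff_translation_small:
  fixes A :: "real set"
  assumes A: "A \<in> sets lebesgue" "bounded A" and "\<delta> > 0"
  obtains r where "r > 0" "\<And>t. \<bar>t\<bar> < r \<Longrightarrow> measure lebesgue (A - (+) t ` A) < \<delta>"
proof -
  obtain K where K: "closed K" "K \<subseteq> A" "A - K \<in> lmeasurable" "emeasure lebesgue (A - K) < \<delta> / 2"
    using sets_lebesgue_inner_closed[OF A(1), of "\<delta> / 2"] \<open>\<delta> > 0\<close> by auto
  obtain U where U: "open U" "A \<subseteq> U" "U - A \<in> lmeasurable" "emeasure lebesgue (U - A) < \<delta> / 2"
    using sets_lebesgue_outer_open[OF A(1), of "\<delta> / 2"] \<open>\<delta> > 0\<close> by auto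
  have "compact K" using K A(2) bounded_subset compact_eq_bounded_closed by blast
  then obtain r where r: "r > 0" "(\<Union>x\<in>K. ball x r) \<subseteq> U"
    using compact_subset_open_imp_ball_epsilon_subset[of K U] K(2) U(1,2) by blast
  have K_small: "measure lebesgue (A - K) < \<delta> / 2"
    using K(3,4) \<open>\<delta> > 0\<close> by (simp add: emeasure_eq_measure2 ennreal_less_iff)
  have U_small: "measure lebesgue (U - A) < \<delta> / 2"
    using U(3,4) \<open>\<delta> > 0\<close> by (simp add: emeasure_eq_measure2 ennreal_less_iff)
  show thesis
  proof (rule that[OF r(1)])
    fix t :: real assume t: "\<bar>t\<bar> < r"
    have "x - t \<in> U" if "x \<in> K" for x
      using r(2) that t by (force simp: dist_real_def)
    then have cover: "A - (+) t ` A \<subseteq> (A - K) \<union> (+) t ` (U - A)"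
      by (force simp: image_iff algebra_simps)
    have tU: "(+) t ` (U - A) \<in> lmeasurable" using U(3) by (rule measurable_translation)
    have "A - (+) t ` A \<in> sets lebesgue"
      using A(1) lebesgue_sets_translation[OF A(1), of t] by auto
    then have "measure lebesgue (A - (+) t ` A) \<le> measure lebesgue ((A - K) \<union> (+) t ` (U - A))"
      using K(3) tU cover by (intro measure_mono_fmeasurable) auto
    also have "\<dots> \<le> measure lebesgue (A - K) + measure lebesgue ((+) t ` (U - A))"
      using K(3) tU by (intro measure_subadditive) (auto simp: fmeasurable_def)
    also have "\<dots> < \<delta>" using K_small U_small by (simp add: measure_translation)
    finally show "measure lebesgue (A - (+) t ` A) < \<delta>" .
  qed
qed

section \<open>Self-overlap of a set of reals\<close>

text \<open>\<open>self_overlap A d\<close> is the convolution \<open>(1\<^sub>A * 1\<^sub>A)(d)\<close> on the real line.\<close>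

definition self_overlap :: "real set \<Rightarrow> real \<Rightarrow> real" where
  "self_overlap A d = measure lebesgue {x \<in> A. d - x \<in> A}"

definition max_self_overlap :: "real set \<Rightarrow> real" where
  "max_self_overlap A = (SUP d. self_overlap A d)"

lemma sets_lebesgue_self_overlap_set:
  fixes A :: "real set"
  assumes "A \<in> sets lebesgue"
  shows "{x \<in> A. d - x \<in> A} \<in> sets lebesgue"
proof -
  have "{x \<in> A. d - x \<in> A} = A \<inter> (\<lambda>x. (-1) * x + d) ` A"
    by (force simp: image_iff)
  then show ?thesis
    using sets_lebesgue_affine_image[OF assms, of "-1" d] assms by simp
qed

lemma lmeasurable_self_overlap_set:
  fixes A :: "real set"
  assumes "A \<in> lmeasurable"
  shows "{x \<in> A. d - x \<in> A} \<in> lmeasurable"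
  using fmeasurableI2[OF assms _ sets_lebesgue_self_overlap_set[OF fmeasurableD[OF assms]]] by blast

lemma self_overlap_nonneg: "0 \<le> self_overlap A d"
  by (simp add: self_overlap_def)

lemma self_overlap_le_measure: "A \<in> lmeasurable \<Longrightarrow> self_overlap A d \<le> measure lebesgue A"
  unfolding self_overlap_def
  by (rule measure_mono_fmeasurable) (auto intro: sets_lebesgue_self_overlap_set)

lemma self_overlap_le_shift:
  fixes A :: "real set"
  assumes A: "A \<in> lmeasurable"
  shows "self_overlap A d' \<le> self_overlap A d + measure lebesgue (A - (+) (d' - d) ` A)"
proof -
  let ?Q = "A - (+) (d' - d) ` A"
  let ?R = "(\<lambda>z. (-1) * z + d') ` ?Q"
  have Q: "?Q \<in> lmeasurable"
    using lebesgue_sets_translation[of A "d' - d"] A by (intro fmeasurableI2[OF A]) auto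
  have R: "?R \<in> lmeasurable" "measure lebesgue ?R = measure lebesgue ?Q"
    using lmeasurable_affine_image[OF Q, of "-1" d'] measure_lebesgue_affine_image[of "-1" d' ?Q]
    by simp_all
  \<comment> \<open>a point counted at \<open>d'\<close> but not at \<open>d\<close> reflects about \<open>d'/2\<close> into \<open>?Q\<close>\<close>
  have "x \<in> ?R" if "x \<in> A" "d' - x \<in> A" "d - x \<notin> A" for x
    using that by (intro rev_image_eqI[of "d' - x"]) (auto simp: image_iff algebra_simps)
  then have "{x \<in> A. d' - x \<in> A} \<subseteq> {x \<in> A. d - x \<in> A} \<union> ?R"
    by blast
  moreover have "{x \<in> A. d - x \<in> A} \<in> lmeasurable" "{x \<in> A. d' - x \<in> A} \<in> lmeasurable"
    using A by (simp_all add: lmeasurable_self_overlap_set)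
  ultimately have "self_overlap A d' \<le> measure lebesgue ({x \<in> A. d - x \<in> A} \<union> ?R)"
    unfolding self_overlap_def using R(1) by (intro measure_mono_fmeasurable) auto
  also have "\<dots> \<le> self_overlap A d + measure lebesgue ?R"
    unfolding self_overlap_def using R(1) \<open>{x \<in> A. d - x \<in> A} \<in> lmeasurable\<close>
    by (intro measure_subadditive) (auto simp: fmeasurable_def)
  finally show ?thesis using R(2) by simp
qed

lemma isCont_self_overlap:
  fixes A :: "real set"
  assumes A: "A \<in> sets lebesgue" "bounded A"
  shows "isCont (self_overlap A) d"
  unfolding continuous_at_eps_delta
proof (intro allI impI)
  fix \<delta> :: real assume "\<delta> > 0"
  then obtain r where r: "r > 0" "\<And>t. \<bar>t\<bar> < r \<Longrightarrow> measure lebesgue (A - (+) t ` A) < \<delta>"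
    using measure_Diff_translation_small[OF A] by blast
  have "A \<in> lmeasurable" using A by (simp add: bounded_set_imp_lmeasurable)
  then have "\<bar>self_overlap A d' - self_overlap A d\<bar> < \<delta>" if "\<bar>d' - d\<bar> < r" for d'
  proof -
    have "measure lebesgue (A - (+) (d' - d) ` A) < \<delta>" "measure lebesgue (A - (+) (d - d') ` A) < \<delta>"
      using r(2) that by (simp_all add: abs_minus_commute)
    then show ?thesis
      using self_overlap_le_shift[OF \<open>A \<in> lmeasurable\<close>, of d' d]
        self_overlap_le_shift[OF \<open>A \<in> lmeasurable\<close>, of d d']
      unfolding abs_less_iff by linarith
  qed
  then show "\<exists>r>0. \<forall>d'. dist d' d < r \<longrightarrow> dist (self_overlap A d') (self_overlap A d) < \<delta>"
    using r(1) by (auto simp: dist_real_def)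
qed

lemma self_overlap_eq_0:
  fixes A :: "real set"
  assumes "A \<subseteq> {a..b}" "d \<le> 2 * a \<or> 2 * b \<le> d"
  shows "self_overlap A d = 0"
proof -
  have "x = a \<or> x = b" if "x \<in> A" "d - x \<in> A" for x
  proof -
    have "a \<le> x" "x \<le> b" "a \<le> d - x" "d - x \<le> b"
      using assms(1) that by auto
    then show ?thesis using assms(2) by arith
  qed
  then have "{x \<in> A. d - x \<in> A} \<subseteq> {a, b}"
    by blast
  then show ?thesis
    unfolding self_overlap_def by (meson finite.emptyI finite.insertI negligible_finite
        negligible_subset negligible_imp_measure0)
qed

lemma bdd_above_self_overlap: "A \<in> lmeasurable \<Longrightarrow> bdd_above (self_overlap A ` S)"
  by (meson bdd_aboveI2 self_overlap_le_measure)

lemma self_overlap_le_max: "A \<in> lmeasurable \<Longrightarrow> self_overlap A d \<le> max_self_overlap A"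
  unfolding max_self_overlap_def by (rule cSUP_upper) (auto intro: bdd_above_self_overlap)

lemma max_self_overlap_nonneg: "A \<in> lmeasurable \<Longrightarrow> 0 \<le> max_self_overlap A"
  using self_overlap_nonneg self_overlap_le_max order_trans by blast

lemma D_eq_max_self_overlap:
  assumes A: "A \<in> lmeasurable"
  shows "D A = max_self_overlap A"
proof -
  define S where "S = {measure lebesgue C | C. C \<in> sets lebesgue \<and> C \<subseteq> A \<and> symmetric_set C}"
  have overlap_in_S: "self_overlap A d \<in> S" for d
  proof -
    have "symmetric_set {x \<in> A. d - x \<in> A}"
      unfolding symmetric_set_def by (rule exI[of _ "d / 2"]) (auto simp: algebra_simps)
    then show ?thesis
      unfolding S_def self_overlap_def using sets_lebesgue_self_overlap_set A by blast
  qed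
  have S_le_overlap: "\<exists>d. s \<le> self_overlap A d" if "s \<in> S" for s
  proof -
    obtain C c where C: "s = measure lebesgue C" "C \<in> sets lebesgue" "C \<subseteq> A"
      and c: "\<And>x. c + x \<in> C \<longleftrightarrow> c - x \<in> C"
      using \<open>s \<in> S\<close> unfolding S_def symmetric_set_def by blast
    have "2 * c - y \<in> C" if "y \<in> C" for y
      using c[of "y - c"] that by (simp add: algebra_simps)
    then have "C \<subseteq> {x \<in> A. 2 * c - x \<in> A}" using C(3) by blast
    then have "s \<le> self_overlap A (2 * c)"
      unfolding C(1) self_overlap_def using C(2) A
      by (intro measure_mono_fmeasurable) (auto intro: lmeasurable_self_overlap_set)
    then show ?thesis by blast
  qed
  have "bdd_above S"
  proof (rule bdd_aboveI)
    fix s assume "s \<in> S"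
    then obtain d where "s \<le> self_overlap A d" using S_le_overlap by blast
    then show "s \<le> measure lebesgue A" using self_overlap_le_measure[OF A, of d] by linarith
  qed
  then have "Sup S = max_self_overlap A"
    unfolding max_self_overlap_def using overlap_in_S S_le_overlap bdd_above_self_overlap[OF A]
    by (intro antisym cSup_mono) auto
  then show ?thesis unfolding D_def S_def .
qed

section \<open>Sets on the circle and normalized indicator functions\<close>

lemma torus_set_eq_UN: "torus_set E = (\<Union>k::int. (+) (- of_int k) ` E)"
proof (intro set_eqI iffI)
  fix x assume "x \<in> torus_set E"
  then obtain k :: int where "x + of_int k \<in> E" by (auto simp: torus_set_def)
  then have "x \<in> (+) (- of_int k) ` E" by (intro rev_image_eqI[of "x + of_int k"]) auto
  then show "x \<in> (\<Union>k::int. (+) (- of_int k) ` E)" by blast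
next
  fix x assume "x \<in> (\<Union>k::int. (+) (- of_int k) ` E)"
  then obtain k :: int and y where "y \<in> E" "x = - of_int k + y" by auto
  then have "x + of_int k \<in> E" by simp
  then show "x \<in> torus_set E" unfolding torus_set_def by blast
qed

lemma sets_lebesgue_torus_set:
  assumes "E \<in> sets lebesgue"
  shows "torus_set E \<in> sets lebesgue"
  unfolding torus_set_eq_UN using lebesgue_sets_translation[OF assms]
  by (intro sets.countable_UN) blast

lemma torus_set_add_1 [simp]: "x + 1 \<in> torus_set E \<longleftrightarrow> x \<in> torus_set E"
proof
  assume "x + 1 \<in> torus_set E"
  then obtain k :: int where "x + 1 + of_int k \<in> E" by (auto simp: torus_set_def)
  then have "x + of_int (k + 1) \<in> E" by (simp add: algebra_simps)
  then show "x \<in> torus_set E" unfolding torus_set_def by blast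
next
  assume "x \<in> torus_set E"
  then obtain k :: int where "x + of_int k \<in> E" by (auto simp: torus_set_def)
  then have "x + 1 + of_int (k - 1) \<in> E" by simp
  then show "x + 1 \<in> torus_set E" unfolding torus_set_def by blast
qed

lemma torus_set_mono: "E \<subseteq> F \<Longrightarrow> torus_set E \<subseteq> torus_set F"
  unfolding torus_set_def by blast

lemma mem_torus_set_iff:
  fixes E :: "real set"
  assumes E: "E \<subseteq> {a..b}" and "b - a < 1" "y \<in> {a..b + 1}"
  shows "y \<in> torus_set E \<longleftrightarrow> y \<in> E \<or> y - 1 \<in> E"
proof
  assume "y \<in> torus_set E"
  then obtain k :: int where k: "y + of_int k \<in> E" by (auto simp: torus_set_def)
  then have "a \<le> y + of_int k" "y + of_int k \<le> b" using E by auto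
  then have "-2 < real_of_int k" "real_of_int k < 1" using assms(2,3) by auto
  then have "k = 0 \<or> k = -1" by linarith
  then show "y \<in> E \<or> y - 1 \<in> E" using k by auto
next
  assume "y \<in> E \<or> y - 1 \<in> E"
  then have "y + of_int (0::int) \<in> E \<or> y + of_int (-1::int) \<in> E" by simp
  then show "y \<in> torus_set E" unfolding torus_set_def by blast
qed

lemma torus_set_Int_window:
  fixes E :: "real set"
  assumes E: "E \<subseteq> {a<..<a + 1}"
  shows "torus_set E \<inter> {a..a + 1} = E"
proof (intro set_eqI iffI)
  fix x assume x: "x \<in> torus_set E \<inter> {a..a + 1}"
  then obtain k :: int where k: "x + of_int k \<in> E" by (auto simp: torus_set_def)
  then have "a < x + of_int k" "x + of_int k < a + 1" using E by auto
  then have "-1 < real_of_int k" "real_of_int k < 1" using x by auto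
  then have "k = 0" by linarith
  then show "x \<in> E" using k by simp
next
  fix x assume "x \<in> E"
  then have "x + of_int (0::int) \<in> E" by simp
  then have "x \<in> torus_set E" unfolding torus_set_def by blast
  moreover have "x \<in> {a..a + 1}" using E \<open>x \<in> E\<close> by auto
  ultimately show "x \<in> torus_set E \<inter> {a..a + 1}" by (rule IntI)
qed

lemma measure_periodic_window:
  fixes W :: "real set"
  assumes W: "W \<in> sets lebesgue" and periodic: "\<And>x. x + 1 \<in> W \<longleftrightarrow> x \<in> W"
    and a: "0 \<le> a" "a \<le> 1"
  shows "measure lebesgue (W \<inter> {a - 1..a}) = measure lebesgue (W \<inter> {0..1})"
proof -
  have lm: "W \<inter> {s..t} \<in> lmeasurable" for s t
    using W by (intro bounded_set_imp_lmeasurable sets.Int bounded_Int) auto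
  have split: "measure lebesgue (W \<inter> {s..u})
      = measure lebesgue (W \<inter> {s..t}) + measure lebesgue (W \<inter> {t..u})"
    if "s \<le> t" "t \<le> u" for s t u
  proof -
    have "W \<inter> {s..u} = W \<inter> {s..t} \<union> W \<inter> {t..u}" using that by auto
    moreover have "measure lebesgue (W \<inter> {s..t} \<inter> (W \<inter> {t..u})) = 0"
      by (rule negligible_imp_measure0, rule negligible_subset[of "{t}"]) auto
    ultimately show ?thesis using measure_Un3[OF lm lm, of s t t u] by simp
  qed
  have shift: "W \<inter> {a..1} = (+) 1 ` (W \<inter> {a - 1..0})"
  proof (intro set_eqI iffI)
    fix y assume "y \<in> W \<inter> {a..1}"
    then show "y \<in> (+) 1 ` (W \<inter> {a - 1..0})"
      using periodic[of "y - 1"] by (intro rev_image_eqI[of "y - 1"]) auto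
  next
    fix y assume "y \<in> (+) 1 ` (W \<inter> {a - 1..0})"
    then obtain z where "z \<in> W \<inter> {a - 1..0}" "y = z + 1" by auto
    then show "y \<in> W \<inter> {a..1}" using periodic[of z] by auto
  qed
  have "measure lebesgue (W \<inter> {a - 1..a})
      = measure lebesgue (W \<inter> {a - 1..0}) + measure lebesgue (W \<inter> {0..a})"
    using a by (intro split) auto
  also have "measure lebesgue (W \<inter> {a - 1..0}) = measure lebesgue (W \<inter> {a..1})"
    unfolding shift measure_translation ..
  also have "measure lebesgue (W \<inter> {a..1}) + measure lebesgue (W \<inter> {0..a})
      = measure lebesgue (W \<inter> {0..1})"
    using split[of 0 a 1] a by simp
  finally show ?thesis .
qed

lemma integral_lebesgue_on_indicator:
  assumes "S \<in> sets lebesgue" "T \<in> sets lebesgue"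
  shows "integral\<^sup>L (lebesgue_on T) (indicator S :: real \<Rightarrow> real) = measure lebesgue (S \<inter> T)"
  using assms by (simp add: measure_restrict_space)

lemma integrable_lebesgue_on_indicator:
  assumes "S \<in> sets lebesgue" "T \<in> lmeasurable"
  shows "integrable (lebesgue_on T) (indicator S :: real \<Rightarrow> real)"
proof -
  have "emeasure (lebesgue_on T) (S \<inter> T) < \<infinity>"
    using finite_measure.emeasure_finite[OF finite_measure_lebesgue_on[OF assms(2)]]
    by (simp add: top.not_eq_extremum)
  then show ?thesis
    using assms by (simp add: integrable_indicator_iff sets_restrict_space_iff fmeasurableD)
qed

lemma measure_torus_set_Int_01:
  assumes E: "E \<in> sets lebesgue" "E \<subseteq> {-1/2<..<1/2}"
  shows "measure lebesgue (torus_set E \<inter> {0..1}) = measure lebesgue E"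
proof -
  have "measure lebesgue (torus_set E \<inter> {0..1}) = measure lebesgue (torus_set E \<inter> {1/2 - 1..1/2})"
    using measure_periodic_window[OF sets_lebesgue_torus_set[OF E(1)], of "1/2"] by simp
  also have "torus_set E \<inter> {1/2 - 1..1/2} = E"
    using torus_set_Int_window[of E "-1/2"] E(2) by simp
  finally show ?thesis .
qed

lemma nif_of_eq_indicator: "nif_of E = (\<lambda>x. indicator (torus_set E) x / measure lebesgue E)"
  by (auto simp: nif_of_def indicator_def)

lemma pdf_nif_of:
  assumes E: "E \<in> sets lebesgue" "E \<subseteq> {-1/2<..<1/2}" and pos: "measure lebesgue E > 0"
  shows "pdf (nif_of E)"
  unfolding pdf_def
proof (intro conjI allI)
  let ?U = "torus_set E" and ?m = "measure lebesgue E"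
  have U: "?U \<in> sets lebesgue" using E(1) by (rule sets_lebesgue_torus_set)
  show "periodic1 (nif_of E)" by (simp add: periodic1_def nif_of_def)
  show "0 \<le> nif_of E x" for x by (simp add: nif_of_def)
  show "nif_of E \<in> borel_measurable (lebesgue_on {0..1})"
    unfolding nif_of_eq_indicator using U
    by (intro measurable_restrict_space1 borel_measurable_divide borel_measurable_indicator) auto
  have "(\<lambda>x. (nif_of E x)\<^sup>2) = (\<lambda>x. indicator ?U x / ?m\<^sup>2)"
    by (auto simp: nif_of_eq_indicator indicator_def power2_eq_square)
  then show "integrable (lebesgue_on {0..1}) (\<lambda>x. (nif_of E x)\<^sup>2)"
    using integrable_lebesgue_on_indicator[OF U, of "{0..1}"] by simp
  show "integral\<^sup>L (lebesgue_on {0..1}) (nif_of E) = 1"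
    using integral_lebesgue_on_indicator[OF U, of "{0..1}"] measure_torus_set_Int_01[OF E] pos
    by (simp add: nif_of_eq_indicator)
qed

lemma conv_nif_of:
  assumes E: "E \<in> sets lebesgue" "E \<subseteq> {-1/4..1/4}" and c: "c \<in> {0..1}"
  shows "conv (nif_of E) (nif_of E) c
    = (self_overlap E c + self_overlap E (c - 1)) / (measure lebesgue E)\<^sup>2"
proof -
  let ?U = "torus_set E" and ?m = "measure lebesgue E"
  define W where "W = {x \<in> ?U. c - x \<in> ?U}"
  have W: "W \<in> sets lebesgue"
    unfolding W_def using sets_lebesgue_self_overlap_set sets_lebesgue_torus_set E(1) by blast
  have W_periodic: "x + 1 \<in> W \<longleftrightarrow> x \<in> W" for x
  proof -
    have "c - (x + 1) \<in> ?U \<longleftrightarrow> c - x \<in> ?U"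
      using torus_set_add_1[of "c - (x + 1)" E] by simp
    then show ?thesis by (simp add: W_def)
  qed
  have E_window: "E \<subseteq> {-1/2<..<-1/2 + 1}" using E(2) by auto
  have "W \<inter> {-1/2..-1/2 + 1} = {x \<in> E. c - x \<in> ?U}"
    using torus_set_Int_window[OF E_window] unfolding W_def by blast
  also have "\<dots> = {x \<in> E. c - x \<in> E} \<union> {x \<in> E. (c - 1) - x \<in> E}"
    using mem_torus_set_iff[OF E(2)] c E(2) by (auto simp: subset_iff algebra_simps)
  finally have W_window:
      "W \<inter> {1/2 - 1..1/2} = {x \<in> E. c - x \<in> E} \<union> {x \<in> E. (c - 1) - x \<in> E}"
    by simp
  have False if "c - x \<in> E" "(c - 1) - x \<in> E" for x
    using subsetD[OF E(2) that(1)] subsetD[OF E(2) that(2)] by simp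
  then have disjoint: "{x \<in> E. c - x \<in> E} \<inter> {x \<in> E. (c - 1) - x \<in> E} = {}"
    by blast
  have El: "E \<in> lmeasurable"
    using E by (intro bounded_set_imp_lmeasurable bounded_subset[OF bounded_closed_interval])
  have "conv (nif_of E) (nif_of E) c = integral\<^sup>L (lebesgue_on {0..1}) (\<lambda>x. indicator W x / ?m\<^sup>2)"
    unfolding conv_def by (rule Bochner_Integration.integral_cong)
      (auto simp: nif_of_eq_indicator W_def indicator_def power2_eq_square)
  also have "\<dots> = measure lebesgue (W \<inter> {1/2 - 1..1/2}) / ?m\<^sup>2"
    using integral_lebesgue_on_indicator[OF W, of "{0..1}"]
      measure_periodic_window[OF W W_periodic, of "1/2"]
    by simp
  also have "\<dots> = (self_overlap E c + self_overlap E (c - 1)) / ?m\<^sup>2"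
    unfolding W_window self_overlap_def
    using measure_Un3[OF lmeasurable_self_overlap_set[OF El] lmeasurable_self_overlap_set[OF El]] disjoint
    by simp
  finally show ?thesis .
qed

lemma esssup_lebesgue_on_ge_continuous:
  fixes h :: "real \<Rightarrow> real"
  assumes h: "continuous_on {a..b} h" and "a < b" "c \<in> {a..b}"
  shows "ereal (h c) \<le> esssup (lebesgue_on {a..b}) (\<lambda>x. ereal (h x))"
proof (rule ccontr)
  let ?S = "esssup (lebesgue_on {a..b}) (\<lambda>x. ereal (h x))"
  assume "\<not> ereal (h c) \<le> ?S"
  then have "?S < ereal (h c)" by simp
  then obtain w where w: "?S < ereal w" "ereal w < ereal (h c)"
    using ereal_dense2 by blast
  then have "w < h c" by simp
  then obtain r where "r > 0" and r: "\<forall>x\<in>{a..b}. dist x c < r \<longrightarrow> dist (h x) (h c) < h c - w"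
    using h \<open>c \<in> {a..b}\<close> unfolding continuous_on_iff by (meson diff_gt_0_iff_gt)
  define l u where "l = max a (c - r)" and "u = min b (c + r)"
  have "l < u" using \<open>c \<in> {a..b}\<close> \<open>r > 0\<close> \<open>a < b\<close> by (auto simp: l_def u_def)
  have near_c: "x \<in> {a..b}" "w < h x" if "x \<in> {l<..<u}" for x
    using that r by (auto simp: l_def u_def dist_real_def abs_less_iff)
  have "x \<notin> {l<..<u}" if "ereal (h x) \<le> ?S" for x
  proof
    assume "x \<in> {l<..<u}"
    then have "w < h x" using near_c by simp
    moreover have "ereal (h x) < ereal w" using that w(1) by (rule le_less_trans)
    ultimately show False by simp
  qed
  then have "AE x in lebesgue. x \<in> {a..b} \<longrightarrow> x \<notin> {l<..<u}"
    using esssup_AE[of "\<lambda>x. ereal (h x)" "lebesgue_on {a..b}"]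
    by (subst (asm) AE_restrict_space_iff) (auto elim!: eventually_mono)
  then have "AE x in lebesgue. x \<notin> {l<..<u}"
    using near_c by (auto elim!: eventually_mono)
  then have "emeasure lebesgue {l<..<u} = 0"
    by (subst (asm) AE_iff_null_sets[symmetric]) auto
  then show False using \<open>l < u\<close> by simp
qed

lemma esssup_lebesgue_on_continuous:
  fixes h :: "real \<Rightarrow> real"
  assumes h: "continuous_on {a..b} h" and "a < b"
  shows "esssup (lebesgue_on {a..b}) (\<lambda>x. ereal (h x)) = ereal (SUP x\<in>{a..b}. h x)"
proof (rule antisym)
  let ?S = "esssup (lebesgue_on {a..b}) (\<lambda>x. ereal (h x))"
  have bdd: "bdd_above (h ` {a..b})"
    using compact_continuous_image[OF h] by (simp add: bounded_imp_bdd_above compact_imp_bounded)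
  have meas: "(\<lambda>x. ereal (h x)) \<in> borel_measurable (lebesgue_on {a..b})"
    by (intro borel_measurable_ereal continuous_imp_measurable_on_sets_lebesgue[OF h]) simp
  show "?S \<le> ereal (SUP x\<in>{a..b}. h x)"
    using cSUP_upper[OF _ bdd] by (intro esssup_I[OF meas] AE_I2) simp
  show "ereal (SUP x\<in>{a..b}. h x) \<le> ?S"
  proof (rule ccontr)
    assume "\<not> ereal (SUP x\<in>{a..b}. h x) \<le> ?S"
    then have "?S < ereal (SUP x\<in>{a..b}. h x)" by simp
    then obtain w where w: "?S < ereal w" "ereal w < ereal (SUP x\<in>{a..b}. h x)"
      using ereal_dense2 by blast
    then obtain c where c: "c \<in> {a..b}" "w < h c"
      using bdd \<open>a < b\<close> by (auto simp: less_cSUP_iff)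
    have "ereal (h c) < ereal w"
      using esssup_lebesgue_on_ge_continuous[OF h \<open>a < b\<close> c(1)] w(1) by (rule le_less_trans)
    then show False using c(2) by simp
  qed
qed

lemma self_overlap_periodized_le_max:
  fixes E :: "real set"
  assumes E: "E \<in> lmeasurable" "E \<subseteq> {-1/4..1/4}"
  shows "self_overlap E c + self_overlap E (c - 1) \<le> max_self_overlap E"
proof (cases "c \<le> 1/2")
  case True
  then have "self_overlap E (c - 1) = 0" by (intro self_overlap_eq_0[OF E(2)]) simp
  then show ?thesis using self_overlap_le_max[OF E(1), of c] by simp
next
  case False
  then have "self_overlap E c = 0" by (intro self_overlap_eq_0[OF E(2)]) simp
  then show ?thesis using self_overlap_le_max[OF E(1), of "c - 1"] by simp
qed

lemma self_overlap_le_periodized: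
  fixes E :: "real set"
  assumes "E \<subseteq> {-1/4..1/4}"
  obtains c where "c \<in> {0..1}" "self_overlap E d \<le> self_overlap E c + self_overlap E (c - 1)"
proof -
  consider "0 \<le> d" "d \<le> 1/2" | "-1/2 < d" "d < 0" | "d \<le> -1/2 \<or> 1/2 \<le> d"
    by atomize_elim linarith
  then show thesis
  proof cases
    case 1
    show thesis by (rule that[of d]) (use 1 self_overlap_nonneg[of E "d - 1"] in simp_all)
  next
    case 2
    show thesis by (rule that[of "d + 1"]) (use 2 self_overlap_nonneg[of E "d + 1"] in simp_all)
  next
    case 3
    then have "self_overlap E d = 0" using self_overlap_eq_0[OF assms] by simp
    show thesis
      by (rule that[of 0])
        (use \<open>self_overlap E d = 0\<close> self_overlap_nonneg[of E 0] self_overlap_nonneg[of E "-1"] in simp_all)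
  qed
qed

lemma SUP_self_overlap_periodized:
  fixes E :: "real set"
  assumes E: "E \<in> lmeasurable" "E \<subseteq> {-1/4..1/4}"
  shows "(SUP c\<in>{0..1}. self_overlap E c + self_overlap E (c - 1)) = max_self_overlap E"
proof (rule antisym)
  show "(SUP c\<in>{0..1}. self_overlap E c + self_overlap E (c - 1)) \<le> max_self_overlap E"
    by (intro cSUP_least self_overlap_periodized_le_max[OF E]) simp
  have bdd: "bdd_above ((\<lambda>c. self_overlap E c + self_overlap E (c - 1)) ` {0..1})"
  proof (rule bdd_aboveI2)
    fix c :: real
    show "self_overlap E c + self_overlap E (c - 1) \<le> 2 * measure lebesgue E"
      using self_overlap_le_measure[OF E(1), of c] self_overlap_le_measure[OF E(1), of "c - 1"] by linarith
  qed
  show "max_self_overlap E \<le> (SUP c\<in>{0..1}. self_overlap E c + self_overlap E (c - 1))"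
    unfolding max_self_overlap_def
  proof (rule cSUP_least[OF UNIV_not_empty])
    fix d
    obtain c where "c \<in> {0..1}" "self_overlap E d \<le> self_overlap E c + self_overlap E (c - 1)"
      using self_overlap_le_periodized[OF E(2)] .
    then show "self_overlap E d \<le> (SUP c\<in>{0..1}. self_overlap E c + self_overlap E (c - 1))"
      by (intro cSUP_upper2[OF bdd])
  qed
qed

lemma supnorm_conv_nif_of:
  assumes E: "E \<in> sets lebesgue" "E \<subseteq> {-1/4..1/4}" and pos: "measure lebesgue E > 0"
  shows "supnorm (conv (nif_of E) (nif_of E)) = ereal (max_self_overlap E / (measure lebesgue E)\<^sup>2)"
proof -
  let ?m = "measure lebesgue E" and ?M = "lebesgue_on {0..1::real}"
  define p where "p c = self_overlap E c + self_overlap E (c - 1)" for c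
  have bounded: "bounded E" using E(2) by (rule bounded_subset[OF bounded_closed_interval])
  then have El: "E \<in> lmeasurable" using E(1) by (simp add: bounded_set_imp_lmeasurable)
  have cont: "isCont (self_overlap E) d" for d by (rule isCont_self_overlap[OF E(1) bounded])
  have "isCont p c" for c
    unfolding p_def by (intro isCont_add cont isCont_o2[OF _ cont] continuous_intros)
  then have p_cont: "continuous_on {0..1} p" by (simp add: continuous_at_imp_continuous_on)
  have meas_p: "(\<lambda>c. ereal (p c)) \<in> borel_measurable ?M"
    by (intro borel_measurable_ereal continuous_imp_measurable_on_sets_lebesgue[OF p_cont]) simp
  then have meas_scaled: "(\<lambda>c. ereal (1 / ?m\<^sup>2) * ereal (p c)) \<in> borel_measurable ?M"
    by (intro borel_measurable_ereal_times borel_measurable_const)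
  have conv_eq: "ereal \<bar>conv (nif_of E) (nif_of E) c\<bar> = ereal (1 / ?m\<^sup>2) * ereal (p c)"
    if "c \<in> space ?M" for c
    using that conv_nif_of[OF E, of c] self_overlap_nonneg[of E] by (simp add: p_def)
  have meas_conv: "(\<lambda>c. ereal \<bar>conv (nif_of E) (nif_of E) c\<bar>) \<in> borel_measurable ?M"
    using measurable_cong[where f = "\<lambda>c. ereal \<bar>conv (nif_of E) (nif_of E) c\<bar>"
        and g = "\<lambda>c. ereal (1 / ?m\<^sup>2) * ereal (p c)" and M = ?M] conv_eq meas_scaled
    by blast
  have "supnorm (conv (nif_of E) (nif_of E)) = esssup ?M (\<lambda>c. ereal (1 / ?m\<^sup>2) * ereal (p c))"
    unfolding supnorm_def using conv_eq by (intro esssup_AE_cong[OF meas_conv meas_scaled] AE_I2)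
  also have "\<dots> = ereal (1 / ?m\<^sup>2) * esssup ?M (\<lambda>c. ereal (p c))"
    using pos by (intro esssup_cmult) simp
  also have "\<dots> = ereal (1 / ?m\<^sup>2) * ereal (SUP c\<in>{0..1}. p c)"
    by (simp only: esssup_lebesgue_on_continuous[OF p_cont zero_less_one])
  also have "\<dots> = ereal (max_self_overlap E / ?m\<^sup>2)"
    using SUP_self_overlap_periodized[OF El E(2)] by (simp add: p_def)
  finally show ?thesis .
qed

section \<open>Rescaling to the unit interval\<close>

lemma cSUP_const_mult:
  fixes f :: "'a \<Rightarrow> real"
  assumes "0 \<le> k" "A \<noteq> {}" "bdd_above (f ` A)"
  shows "(SUP x\<in>A. k * f x) = k * (SUP x\<in>A. f x)"
proof -
  have "mono ((*) k)" using assms(1) by (simp add: mono_def mult_left_mono)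
  moreover have "continuous (at_left (SUP x\<in>A. f x)) ((*) k)" by (intro continuous_intros)
  ultimately show ?thesis
    using continuous_at_Sup_mono[of "(*) k" "f ` A"] assms(2,3) by (simp add: image_comp)
qed

lemma ereal_mult_INF:
  assumes "k > (0::real)"
  shows "ereal k * (INF x\<in>S. f x) = (INF x\<in>S. ereal k * f x)"
  using ereal_Inf_cmult[OF assms, of "\<lambda>x. x \<in> f ` S"] by (simp add: setcompr_eq_image image_image)

lemma self_overlap_affine_image:
  fixes m t d :: real
  assumes "m \<noteq> 0"
  shows "self_overlap ((\<lambda>x. m * x + t) ` A) (m * d + 2 * t) = \<bar>m\<bar> * self_overlap A d"
proof -
  let ?T = "\<lambda>x. m * x + t"
  have reflect: "(m * d + 2 * t) - ?T x = ?T (d - x)" for x by (simp add: algebra_simps)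
  have "{y \<in> ?T ` A. (m * d + 2 * t) - y \<in> ?T ` A} = ?T ` {x \<in> A. d - x \<in> A}"
  proof (intro set_eqI iffI)
    fix y assume "y \<in> {y \<in> ?T ` A. (m * d + 2 * t) - y \<in> ?T ` A}"
    then obtain x x' where "x \<in> A" "x' \<in> A" "y = ?T x" "?T (d - x) = ?T x'"
      using reflect by auto
    moreover have "inj ?T" using assms by (auto intro: injI)
    ultimately show "y \<in> ?T ` {x \<in> A. d - x \<in> A}" by (auto dest: injD)
  next
    fix y assume "y \<in> ?T ` {x \<in> A. d - x \<in> A}"
    then show "y \<in> {y \<in> ?T ` A. (m * d + 2 * t) - y \<in> ?T ` A}"
      using reflect by auto
  qed
  then show ?thesis
    by (simp add: self_overlap_def measure_lebesgue_affine_image del: image_add_atLeastAtMost)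
qed

lemma max_self_overlap_affine_image:
  fixes m t :: real
  assumes A: "A \<in> lmeasurable" and "m \<noteq> 0"
  shows "max_self_overlap ((\<lambda>x. m * x + t) ` A) = \<bar>m\<bar> * max_self_overlap A"
proof -
  have "surj (\<lambda>d. m * d + 2 * t)"
    using \<open>m \<noteq> 0\<close> by (intro surjI[of _ "\<lambda>y. (y - 2 * t) / m"]) simp
  then have "max_self_overlap ((\<lambda>x. m * x + t) ` A)
      = (SUP d. self_overlap ((\<lambda>x. m * x + t) ` A) (m * d + 2 * t))"
    unfolding max_self_overlap_def by (metis image_image)
  also have "\<dots> = (SUP d. \<bar>m\<bar> * self_overlap A d)"
    using self_overlap_affine_image[OF \<open>m \<noteq> 0\<close>] by simp
  also have "\<dots> = \<bar>m\<bar> * max_self_overlap A"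
    unfolding max_self_overlap_def by (rule cSUP_const_mult) (auto intro: bdd_above_self_overlap[OF A])
  finally show ?thesis .
qed

lemma self_overlap_Diff_finite:
  fixes A :: "real set"
  assumes "A \<in> sets lebesgue" "finite N"
  shows "self_overlap (A - N) d = self_overlap A d"
proof -
  have "{x \<in> A - N. d - x \<in> A - N} = {x \<in> A. d - x \<in> A} - (N \<union> (\<lambda>x. d - x) ` N)"
    by force
  moreover have "N \<union> (\<lambda>x. d - x) ` N \<in> null_sets lebesgue"
    using assms(2) by (simp add: negligible_iff_null_sets[symmetric] negligible_finite)
  ultimately show ?thesis
    unfolding self_overlap_def
    using measure_Diff_null_set[OF sets_lebesgue_self_overlap_set[OF assms(1)]] by simp
qed

lemma D_affine_image_Diff_finite:
  fixes m t :: real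
  assumes E: "E \<in> lmeasurable" and "m \<noteq> 0" "finite N"
  shows "D ((\<lambda>x. m * x + t) ` E - N) = \<bar>m\<bar> * max_self_overlap E"
proof -
  let ?A = "(\<lambda>x. m * x + t) ` E"
  have A: "?A \<in> lmeasurable" using lmeasurable_affine_image[OF E \<open>m \<noteq> 0\<close>] .
  have "?A - N \<in> lmeasurable"
    using fmeasurable.Diff[OF A negligible_imp_measurable[OF negligible_finite[OF \<open>finite N\<close>]]] .
  then have "D (?A - N) = max_self_overlap (?A - N)" by (rule D_eq_max_self_overlap)
  also have "\<dots> = max_self_overlap ?A"
    unfolding max_self_overlap_def
    using self_overlap_Diff_finite[OF fmeasurableD[OF A] \<open>finite N\<close>] by simp
  also have "\<dots> = \<bar>m\<bar> * max_self_overlap E"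
    by (rule max_self_overlap_affine_image[OF E \<open>m \<noteq> 0\<close>])
  finally show ?thesis .
qed

text \<open>The map \<open>x \<mapsto> 2 x + 1/2\<close> carries \<open>[-1/4, 1/4]\<close> onto \<open>[0, 1]\<close>; dropping the point \<open>1\<close>
  lands in \<open>[0, 1)\<close>.\<close>

lemma Delta_eq_Inf_max_self_overlap:
  "Delta \<epsilon> = Inf ((\<lambda>E. 2 * max_self_overlap E) `
     {E. E \<in> sets lebesgue \<and> E \<subseteq> {-1/4..1/4} \<and> measure lebesgue E = \<epsilon> / 2})"
proof -
  let ?T = "\<lambda>x::real. 2 * x + 1/2"
  let ?A = "{A :: real set. A \<subseteq> {0..<1} \<and> A \<in> sets lebesgue \<and> measure lebesgue A = \<epsilon>}"
  let ?E = "{E :: real set. E \<in> sets lebesgue \<and> E \<subseteq> {-1/4..1/4} \<and> measure lebesgue E = \<epsilon> / 2}"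
  have lmeasurable_01: "A \<subseteq> {0..<1} \<Longrightarrow> A \<in> sets lebesgue \<Longrightarrow> A \<in> lmeasurable" for A :: "real set"
    by (intro bounded_set_imp_lmeasurable bounded_subset[OF bounded_closed_interval[of 0 1]]) auto
  have "D ` ?A = (\<lambda>E. 2 * max_self_overlap E) ` ?E"
  proof (intro set_eqI iffI)
    fix s assume "s \<in> D ` ?A"
    then obtain A where A: "s = D A" "A \<subseteq> {0..<1}" "A \<in> sets lebesgue" "measure lebesgue A = \<epsilon>"
      by blast
    define E where "E = (\<lambda>y. (1/2) * y + (-1/4)) ` A"
    have "A = ?T ` E - {}" by (simp add: E_def image_image)
    moreover have E: "E \<in> lmeasurable" "E \<subseteq> {-1/4..1/4}" "measure lebesgue E = \<epsilon> / 2"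
      using A(2,4) lmeasurable_affine_image[OF lmeasurable_01[OF A(2,3)], of "1/2" "-1/4"]
        measure_lebesgue_affine_image[of "1/2" "-1/4" A]
      unfolding E_def by auto
    ultimately have "s = 2 * max_self_overlap E"
      using A(1) D_affine_image_Diff_finite[OF E(1), of 2 "{}" "1/2"] by simp
    then show "s \<in> (\<lambda>E. 2 * max_self_overlap E) ` ?E"
      using E by (auto simp: fmeasurableD)
  next
    fix s assume "s \<in> (\<lambda>E. 2 * max_self_overlap E) ` ?E"
    then obtain E where E: "s = 2 * max_self_overlap E" "E \<in> sets lebesgue" "E \<subseteq> {-1/4..1/4}"
        "measure lebesgue E = \<epsilon> / 2"
      by blast
    have El: "E \<in> lmeasurable"
      using E(2,3) by (intro bounded_set_imp_lmeasurable bounded_subset[OF bounded_closed_interval])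
    define A where "A = ?T ` E - {1}"
    have TE: "?T ` E \<in> sets lebesgue" using sets_lebesgue_affine_image[OF E(2)] by simp
    have A: "A \<subseteq> {0..<1}" "A \<in> sets lebesgue" "measure lebesgue A = \<epsilon>"
      using E(3,4) TE measure_Diff_null_set[OF TE, of "{1}"]
      by (auto simp: A_def measure_lebesgue_affine_image)
    have "D A = 2 * max_self_overlap E"
      using D_affine_image_Diff_finite[OF El, of 2 "{1}" "1/2"] by (simp add: A_def)
    then show "s \<in> D ` ?A"
      using A E(1) by (intro rev_image_eqI[of A]) simp_all
  qed
  moreover have "{D A | A. A \<subseteq> {0..<1} \<and> A \<in> sets lebesgue \<and> measure lebesgue A = \<epsilon>} = D ` ?A"
    by blast
  ultimately show ?thesis unfolding Delta_def by simp
qed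

lemma INF_max_self_overlap_eq_Delta:
  assumes "0 \<le> \<epsilon>" "\<epsilon> \<le> 1"
  shows "(INF E\<in>{E. E \<in> sets lebesgue \<and> E \<subseteq> {-1/4..1/4} \<and> measure lebesgue E = \<epsilon> / 2}.
           ereal (2 * max_self_overlap E)) = ereal (Delta \<epsilon>)"
proof -
  let ?E = "{E :: real set. E \<in> sets lebesgue \<and> E \<subseteq> {-1/4..1/4} \<and> measure lebesgue E = \<epsilon> / 2}"
  have "{-1/4..-1/4 + \<epsilon>/2} \<subseteq> {-1/4..1/4::real}"
    using assms by (intro atLeastatMost_subset_iff[THEN iffD2]) simp
  then have "{-1/4..-1/4 + \<epsilon>/2} \<in> ?E" using assms by simp
  then have nonempty: "(\<lambda>E. 2 * max_self_overlap E) ` ?E \<noteq> {}" by blast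
  have "bdd_below ((\<lambda>E. 2 * max_self_overlap E) ` ?E)"
  proof (rule bdd_belowI2)
    fix E assume "E \<in> ?E"
    then have "E \<in> lmeasurable"
      by (auto intro: bounded_set_imp_lmeasurable bounded_subset[OF bounded_closed_interval])
    then show "0 \<le> 2 * max_self_overlap E" using max_self_overlap_nonneg by simp
  qed
  from ereal_Inf'[OF this nonempty] show ?thesis
    by (simp only: Delta_eq_Inf_max_self_overlap image_comp o_def)
qed

theorem lemma2p6:
  fixes \<epsilon> :: real
  assumes "0 < \<epsilon>" and "\<epsilon> \<le> 1"
  shows "ereal (\<epsilon>^2 / 2) *
           (INF g \<in> {g. pdf g \<and> (\<forall>x. x \<notin> torus_set {-1/4..1/4} \<longrightarrow> g x = 0)}.
              supnorm (conv g g))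
         \<le> ereal (\<epsilon>^2 / 2) *
           (INF E \<in> {E. E \<in> sets lebesgue \<and> E \<subseteq> {-1/4..1/4}
                         \<and> measure lebesgue E = \<epsilon> / 2}.
              supnorm (conv (nif_of E) (nif_of E)))
       \<and> ereal (\<epsilon>^2 / 2) *
           (INF E \<in> {E. E \<in> sets lebesgue \<and> E \<subseteq> {-1/4..1/4}
                         \<and> measure lebesgue E = \<epsilon> / 2}.
              supnorm (conv (nif_of E) (nif_of E)))
         = ereal (Delta \<epsilon>)"
proof -
  let ?G = "{g. pdf g \<and> (\<forall>x. x \<notin> torus_set {-1/4..1/4} \<longrightarrow> g x = 0)}"
  let ?E = "{E :: real set. E \<in> sets lebesgue \<and> E \<subseteq> {-1/4..1/4} \<and> measure lebesgue E = \<epsilon> / 2}"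
  have "nif_of E \<in> ?G" if "E \<in> ?E" for E
  proof -
    have "pdf (nif_of E)" using that assms by (intro pdf_nif_of) auto
    moreover have "torus_set E \<subseteq> torus_set {-1/4..1/4}" using that by (intro torus_set_mono) auto
    ultimately show ?thesis by (auto simp: nif_of_def)
  qed
  then have "(INF g\<in>?G. supnorm (conv g g)) \<le> (INF E\<in>?E. supnorm (conv (nif_of E) (nif_of E)))"
    by (intro INF_mono) blast
  then have nif_bound: "ereal (\<epsilon>^2 / 2) * (INF g\<in>?G. supnorm (conv g g))
      \<le> ereal (\<epsilon>^2 / 2) * (INF E\<in>?E. supnorm (conv (nif_of E) (nif_of E)))"
    by (rule ereal_mult_left_mono) simp
  have "ereal (\<epsilon>^2 / 2) * supnorm (conv (nif_of E) (nif_of E)) = ereal (2 * max_self_overlap E)"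
    if "E \<in> ?E" for E
    using that assms supnorm_conv_nif_of[of E] by (simp add: field_simps power2_eq_square)
  then have "ereal (\<epsilon>^2 / 2) * (INF E\<in>?E. supnorm (conv (nif_of E) (nif_of E)))
      = (INF E\<in>?E. ereal (2 * max_self_overlap E))"
    using assms by (simp add: ereal_mult_INF)
  also have "\<dots> = ereal (Delta \<epsilon>)" using assms by (intro INF_max_self_overlap_eq_Delta) auto
  finally show ?thesis using nif_bound by simp
qed

end
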